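(* Fix $n\ge1$ and $\kappa>0$. Let $\mho:\mathcal A_n^*\to(\mathrm{Mat}_n(\mathbb T),\odot)$ be the monoid homomorphism with $\mho(e)=E$ and $\mho(a_\ell)=A^{(\ell)}$ for $\ell=1,\dots,n$. Then for all $u,v\in\mathcal A_n^*$, $$u\equiv_{\mathrm{clk}}v\iff \mho(u)=\mho(v).$$ Hence $\mho$ induces a monoid isomorphism from the cloaktic monoid $\mathcal K_n=\mathcal A_n^*/{\equiv_{\mathrm{clk}}}$ onto the submonoid of $(\mathrm{Mat}_n(\mathbb T),\odot)$ generated by $A^{(1)},\dots,A^{(n)}$ (with identity $E$).
   Context: $\mathcal A_n=\{a_1<\cdots<a_n\}$, $e$ the empty word. Tropical semiring $\mathbb T=\mathbb R\cup\{-\infty\}$, $\oplus=\max$, $\odot=+$; $(A\odot B)_{i,j}=\max_t(a_{i,t}+b_{t,j})$. $A^{(\ell)}_{i,j}=\kappa$ if $i\le\ell\le j$, $=0$ if $i\le j$ but not $i\le\ell\le j$, $=-\infty$ if $i>j$; $E_{i,j}=0$ for $i\le j$, $-\infty$ for $i>j$. A subword is a not necessarily contiguous subsequence. For $w\in\mathcal A_n^*$ and $1\le i\le j\le n$, $L_{[i,j]}(w)$ is the maximal length of a nondecreasing subword of $w$ with all letters in $\{a_i,\dots,a_j\}$ ($0$ if none); $u\equiv_{\mathrm{clk}}v$ iff $L_{[i,j]}(u)=L_{[i,j]}(v)$ for all $1\le i\le j\le n$. *)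

theory Defs
  imports "HOL-Library.Extended_Real" "HOL-Library.Sublist"
begin

text \<open>Tropical semiring T = R with -infinity, represented inside ereal (the value
  +infinity never occurs). An n x n tropical matrix is a function
  nat => nat => ereal whose relevant entries are those with indices in {1..n};
  all entries outside {1..n} x {1..n} are set to -infinity, so that equality of
  matrices is plain function equality.\<close>

type_synonym tmat = "nat \<Rightarrow> nat \<Rightarrow> ereal"

definition trop_mult :: "nat \<Rightarrow> tmat \<Rightarrow> tmat \<Rightarrow> tmat" where
  "trop_mult n A B = (\<lambda>i j. if i \<in> {1..n} \<and> j \<in> {1..n}
      then Max ((\<lambda>t. A i t + B t j) ` {1..n}) else -\<infinity>)"

definition tropE :: "nat \<Rightarrow> tmat" where
  "tropE n = (\<lambda>i j. if i \<in> {1..n} \<and> j \<in> {1..n} \<and> i \<le> j then 0 else -\<infinity>)"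

definition tropA :: "nat \<Rightarrow> real \<Rightarrow> nat \<Rightarrow> tmat" where
  "tropA n \<kappa> l = (\<lambda>i j. if i \<in> {1..n} \<and> j \<in> {1..n} \<and> i \<le> j
      then (if i \<le> l \<and> l \<le> j then ereal \<kappa> else 0) else -\<infinity>)"

text \<open>Words over A_n: lists of letters, letter a_l is encoded as the number l,
  with l in {1..n}.\<close>

definition words :: "nat \<Rightarrow> nat list set" where
  "words n = {w. set w \<subseteq> {1..n}}"

fun mho :: "nat \<Rightarrow> real \<Rightarrow> nat list \<Rightarrow> tmat" where
  "mho n \<kappa> [] = tropE n"
| "mho n \<kappa> (l # w) = trop_mult n (tropA n \<kappa> l) (mho n \<kappa> w)"

definition Lij :: "nat \<Rightarrow> nat \<Rightarrow> nat list \<Rightarrow> nat" where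
  "Lij i j w = Max {length s | s. subseq s w \<and> sorted s \<and> set s \<subseteq> {i..j}}"

definition clk_equiv :: "nat \<Rightarrow> nat list \<Rightarrow> nat list \<Rightarrow> bool" where
  "clk_equiv n u v \<longleftrightarrow> (\<forall>i j. 1 \<le> i \<and> i \<le> j \<and> j \<le> n \<longrightarrow> Lij i j u = Lij i j v)"

inductive_set gen_submonoid :: "nat \<Rightarrow> real \<Rightarrow> tmat set" for n \<kappa> where
  unit: "tropE n \<in> gen_submonoid n \<kappa>"
| step: "M \<in> gen_submonoid n \<kappa> \<Longrightarrow> l \<in> {1..n} \<Longrightarrow>
         trop_mult n M (tropA n \<kappa> l) \<in> gen_submonoid n \<kappa>"

end

theory Submission
  imports Defs
begin

text \<open>The matrix \<open>\<mho>(w)\<close> has entry \<open>\<kappa> \<cdot> L[i,j](w)\<close> at every position \<open>i \<le> j\<close>. This follows by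
  induction on \<open>w\<close> from the recursion \<open>L[i,j](a\<^sub>l w) = max (L[i,j](w), 1 + L[l,j](w))\<close> for
  \<open>i \<le> l \<le> j\<close> (and \<open>L[i,j](a\<^sub>l w) = L[i,j](w)\<close> otherwise): in row \<open>i\<close> of \<open>A\<^sup>(\<^sup>l\<^sup>) \<odot> \<mho>(w)\<close>
  the maximum is attained in column \<open>l\<close> or \<open>i\<close>, and no other column exceeds it because
  \<open>L[t,j]\<close> is antitone in \<open>t\<close>. As \<open>\<kappa> > 0\<close>, \<open>\<mho>(w)\<close> and the family of all \<open>L[i,j](w)\<close>
  determine each other; associativity of \<open>\<odot>\<close> makes \<open>\<mho>\<close> a homomorphism.\<close>

lemma Max_add_left:
  fixes x :: "'a::{linorder, ordered_ab_semigroup_add}"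
  assumes "finite I" "I \<noteq> {}"
  shows "x + (MAX s\<in>I. f s) = (MAX s\<in>I. x + f s)"
proof -
  have "mono (\<lambda>y. x + y)" by (auto intro: monoI add_left_mono)
  from mono_Max_commute[OF this, of "f ` I"] assms show ?thesis by (simp add: image_image)
qed

lemma Max_add_right:
  fixes x :: "'a::{linorder, ordered_ab_semigroup_add}"
  assumes "finite I" "I \<noteq> {}"
  shows "(MAX s\<in>I. f s) + x = (MAX s\<in>I. f s + x)"
proof -
  have "mono (\<lambda>y. y + x)" by (auto intro: monoI add_right_mono)
  from mono_Max_commute[OF this, of "f ` I"] assms show ?thesis by (simp add: image_image)
qed

lemma Max_Max_le_swap:
  fixes g :: "'b \<Rightarrow> 'c \<Rightarrow> 'a::linorder"
  assumes "finite I" "I \<noteq> {}" "finite J" "J \<noteq> {}"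
  shows "(MAX t\<in>I. MAX s\<in>J. g t s) \<le> (MAX s\<in>J. MAX t\<in>I. g t s)"
proof (rule Max.boundedI)
  fix x assume "x \<in> (\<lambda>t. MAX s\<in>J. g t s) ` I"
  then obtain t where t: "t \<in> I" "x = (MAX s\<in>J. g t s)" by auto
  have "g t s \<le> (MAX s\<in>J. MAX t\<in>I. g t s)" if "s \<in> J" for s
    using assms t that by (meson Max_ge finite_imageI image_eqI order.trans)
  then show "x \<le> (MAX s\<in>J. MAX t\<in>I. g t s)" using t assms by (auto intro!: Max.boundedI)
qed (use assms in auto)

lemma Max_Max_swap:
  fixes g :: "'b \<Rightarrow> 'c \<Rightarrow> 'a::linorder"
  assumes "finite I" "I \<noteq> {}" "finite J" "J \<noteq> {}"
  shows "(MAX t\<in>I. MAX s\<in>J. g t s) = (MAX s\<in>J. MAX t\<in>I. g t s)"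
  using Max_Max_le_swap[OF assms, of g] Max_Max_le_swap[OF assms(3,4,1,2), of "\<lambda>s t. g t s"]
  by (rule antisym)

lemma trop_mult_assoc:
  assumes "n \<ge> 1"
  shows "trop_mult n A (trop_mult n B C) = trop_mult n (trop_mult n A B) C"
proof (intro ext)
  fix i j
  have fin: "finite {1..n}" "{1..n} \<noteq> {}" using assms by auto
  show "trop_mult n A (trop_mult n B C) i j = trop_mult n (trop_mult n A B) C i j"
  proof (cases "i \<in> {1..n} \<and> j \<in> {1..n}")
    case True
    have "trop_mult n A (trop_mult n B C) i j
        = (MAX t\<in>{1..n}. A i t + (MAX s\<in>{1..n}. B t s + C s j))"
      using True unfolding trop_mult_def by (auto intro!: arg_cong[where f=Max] image_cong)
    also have "\<dots> = (MAX t\<in>{1..n}. MAX s\<in>{1..n}. A i t + (B t s + C s j))"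
      using fin by (simp add: Max_add_left)
    also have "\<dots> = (MAX s\<in>{1..n}. MAX t\<in>{1..n}. A i t + (B t s + C s j))"
      using fin fin by (rule Max_Max_swap)
    also have "\<dots> = (MAX s\<in>{1..n}. (MAX t\<in>{1..n}. A i t + B t s) + C s j)"
      using fin by (simp add: Max_add_right add.assoc)
    also have "\<dots> = trop_mult n (trop_mult n A B) C i j"
      using True unfolding trop_mult_def by (auto intro!: arg_cong[where f=Max] image_cong)
    finally show ?thesis .
  next
    case False
    then show ?thesis unfolding trop_mult_def by (simp only: if_False)
  qed
qed

fun Lrec :: "nat \<Rightarrow> nat \<Rightarrow> nat list \<Rightarrow> nat" where
  "Lrec i j [] = 0"
| "Lrec i j (l # w) =
     (if i \<le> l \<and> l \<le> j then max (Lrec i j w) (Suc (Lrec l j w)) else Lrec i j w)"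

lemma length_le_Lrec:
  "subseq s w \<Longrightarrow> sorted s \<Longrightarrow> set s \<subseteq> {i..j} \<Longrightarrow> length s \<le> Lrec i j w"
proof (induction w arbitrary: i s)
  case Nil
  then show ?case by simp
next
  case (Cons l w)
  show ?case
  proof (cases s)
    case Nil
    then show ?thesis by simp
  next
    case s: (Cons x s')
    show ?thesis
    proof (cases "x = l")
      case True
      then have "subseq s' w" "sorted s'" "set s' \<subseteq> {l..j}" "i \<le> l" "l \<le> j"
        using Cons.prems s by (auto dest: subseq_Cons2')
      with Cons.IH[of s' l] s show ?thesis by auto
    next
      case False
      then have "subseq s w" using Cons.prems(1) s by (auto dest: subseq_Cons2_neq)
      from Cons.IH[OF this Cons.prems(2,3)] show ?thesis by auto
    qed
  qed
qed

lemma Lrec_attained: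
  "\<exists>s. subseq s w \<and> sorted s \<and> set s \<subseteq> {i..j} \<and> length s = Lrec i j w"
proof (induction w arbitrary: i)
  case Nil
  then show ?case by simp
next
  case (Cons l w)
  show ?case
  proof (cases "i \<le> l \<and> l \<le> j \<and> Lrec i j w \<le> Suc (Lrec l j w)")
    case True
    from Cons.IH[of l] obtain s
      where "subseq s w" "sorted s" "set s \<subseteq> {l..j}" "length s = Lrec l j w" by blast
    with True have "subseq (l # s) (l # w) \<and> sorted (l # s) \<and> set (l # s) \<subseteq> {i..j}
        \<and> length (l # s) = Lrec i j (l # w)" by auto
    then show ?thesis by blast
  next
    case False
    from Cons.IH[of i] obtain s
      where "subseq s w" "sorted s" "set s \<subseteq> {i..j}" "length s = Lrec i j w" by blast
    with False show ?thesis by (intro exI[of _ s]) auto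
  qed
qed

lemma Lij_eq_Lrec: "Lij i j w = Lrec i j w"
  unfolding Lij_def
proof (rule Max_eqI)
  show "finite {length s |s. subseq s w \<and> sorted s \<and> set s \<subseteq> {i..j}}"
    by (rule finite_subset[of _ "{..Lrec i j w}"]) (auto dest: length_le_Lrec)
  show "y \<le> Lrec i j w" if "y \<in> {length s |s. subseq s w \<and> sorted s \<and> set s \<subseteq> {i..j}}" for y
    using that by (auto dest: length_le_Lrec)
  show "Lrec i j w \<in> {length s |s. subseq s w \<and> sorted s \<and> set s \<subseteq> {i..j}}"
    using Lrec_attained[of w i j] by force
qed

lemma Lij_Nil [simp]: "Lij i j [] = 0"
  by (simp add: Lij_eq_Lrec)

lemma Lij_Cons:
  "Lij i j (l # w) =
     (if i \<le> l \<and> l \<le> j then max (Lij i j w) (Suc (Lij l j w)) else Lij i j w)"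
  by (simp add: Lij_eq_Lrec)

lemma Lij_le_Cons: "Lij i j w \<le> Lij i j (l # w)"
  by (simp add: Lij_Cons)

lemma Lij_antimono: "i \<le> i' \<Longrightarrow> Lij i' j w \<le> Lij i j w"
proof (induction w arbitrary: i i')
  case Nil
  then show ?case by simp
next
  case (Cons l w)
  from Cons.IH[OF Cons.prems] Lij_le_Cons[of i j w l] Cons.prems show ?case
    by (auto simp: Lij_Cons max_def)
qed

definition clk_matrix :: "nat \<Rightarrow> real \<Rightarrow> nat list \<Rightarrow> tmat" where
  "clk_matrix n \<kappa> w = (\<lambda>i j. if i \<in> {1..n} \<and> j \<in> {1..n} \<and> i \<le> j
      then ereal (\<kappa> * real (Lij i j w)) else -\<infinity>)"

lemma tropA_add_clk_matrix:
  assumes "i \<in> {1..n}" "j \<in> {1..n}" "t \<in> {1..n}"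
  shows "tropA n \<kappa> l i t + clk_matrix n \<kappa> w t j =
    (if i \<le> t \<and> t \<le> j
     then ereal ((if i \<le> l \<and> l \<le> t then \<kappa> else 0) + \<kappa> * real (Lij t j w)) else -\<infinity>)"
  using assms by (auto simp: tropA_def clk_matrix_def)

lemma Lij_column_le_Cons:
  assumes "i \<le> t" "t \<le> j"
  shows "(if i \<le> l \<and> l \<le> t then 1 else 0) + Lij t j w \<le> Lij i j (l # w)"
proof (cases "i \<le> l \<and> l \<le> t")
  case True
  then have "Lij t j w \<le> Lij l j w" by (intro Lij_antimono) simp
  moreover have "Suc (Lij l j w) \<le> Lij i j (l # w)" using True assms by (simp add: Lij_Cons)
  ultimately show ?thesis using True by simp
next
  case False
  have "Lij t j w \<le> Lij i j w" using assms by (intro Lij_antimono) simp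
  with Lij_le_Cons[of i j w l] show ?thesis unfolding if_not_P[OF False] by simp
qed

lemma clk_matrix_entry_bound:
  assumes "0 \<le> \<kappa>" "i \<le> t" "t \<le> j"
  shows "(if i \<le> l \<and> l \<le> t then \<kappa> else 0) + \<kappa> * real (Lij t j w) \<le> \<kappa> * real (Lij i j (l # w))"
proof -
  have "real (if i \<le> l \<and> l \<le> t then 1 else 0) + real (Lij t j w) \<le> real (Lij i j (l # w))"
    using Lij_column_le_Cons[OF assms(2,3), of l w] by (metis of_nat_add of_nat_mono)
  from mult_left_mono[OF this assms(1)] show ?thesis
    by (auto simp: algebra_simps split: if_split_asm)
qed

lemma tropA_mult_clk_matrix:
  assumes "0 \<le> \<kappa>"
  shows "trop_mult n (tropA n \<kappa> l) (clk_matrix n \<kappa> w) = clk_matrix n \<kappa> (l # w)"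
proof (intro ext)
  fix i j
  show "trop_mult n (tropA n \<kappa> l) (clk_matrix n \<kappa> w) i j = clk_matrix n \<kappa> (l # w) i j"
  proof (cases "i \<in> {1..n} \<and> j \<in> {1..n}")
    case False
    then show ?thesis unfolding trop_mult_def clk_matrix_def by auto
  next
    case True
    then have ij: "i \<in> {1..n}" "j \<in> {1..n}" by auto
    let ?S = "(\<lambda>t. tropA n \<kappa> l i t + clk_matrix n \<kappa> w t j) ` {1..n}"
    have "trop_mult n (tropA n \<kappa> l) (clk_matrix n \<kappa> w) i j = Max ?S"
      using True by (simp add: trop_mult_def)
    also have "Max ?S = clk_matrix n \<kappa> (l # w) i j"
    proof (cases "i \<le> j")
      case False
      then have "?S = (\<lambda>_. -\<infinity>) ` {1..n}"
        using ij by (intro image_cong) (auto simp: tropA_add_clk_matrix)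
      then show ?thesis using False ij by (auto simp: clk_matrix_def)
    next
      case True
      let ?T = "ereal (\<kappa> * real (Lij i j (l # w)))"
      have "Max ?S = ?T"
      proof (rule Max_eqI)
        fix y assume "y \<in> ?S"
        then obtain t where "t \<in> {1..n}" "y = tropA n \<kappa> l i t + clk_matrix n \<kappa> w t j" by auto
        then show "y \<le> ?T"
          using ij clk_matrix_entry_bound[OF assms, of i t j l w]
          by (simp add: tropA_add_clk_matrix)
      next
        txt \<open>The maximum is attained in column \<open>l\<close> if the letter \<open>a\<^sub>l\<close> extends an optimal
          subword, and in column \<open>i\<close> otherwise.\<close>
        show "?T \<in> ?S"
        proof (cases "i \<le> l \<and> l \<le> j \<and> Lij i j w \<le> Suc (Lij l j w)")
          case c: True
          then have "l \<in> {1..n}" "tropA n \<kappa> l i l + clk_matrix n \<kappa> w l j = ?T"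
            using ij by (auto simp: tropA_add_clk_matrix Lij_Cons algebra_simps max_def)
          then show ?thesis by (intro rev_image_eqI[of l]) auto
        next
          case c: False
          then have "tropA n \<kappa> l i i + clk_matrix n \<kappa> w i j = ?T"
            using ij True by (auto simp: tropA_add_clk_matrix Lij_Cons max_def)
          then show ?thesis using ij by (intro rev_image_eqI[of i]) auto
        qed
      qed simp
      then show ?thesis using True ij by (simp add: clk_matrix_def)
    qed
    finally show ?thesis .
  qed
qed

lemma mho_eq_clk_matrix: "0 \<le> \<kappa> \<Longrightarrow> mho n \<kappa> w = clk_matrix n \<kappa> w"
proof (induction w)
  case Nil
  show ?case by (simp add: tropE_def clk_matrix_def zero_ereal_def fun_eq_iff)
next
  case (Cons l w)
  then show ?case by (simp add: tropA_mult_clk_matrix)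
qed

text \<open>\<open>E\<close> is the matrix \<open>A\<^sup>(\<^sup>0\<^sup>)\<close> of a letter lying below every index, which reduces its unit
  property to the step lemma above.\<close>

lemma tropE_eq_tropA_0: "tropE n = tropA n \<kappa> 0"
  by (auto simp: tropE_def tropA_def fun_eq_iff)

lemma clk_matrix_Cons_0: "clk_matrix n \<kappa> (0 # w) = clk_matrix n \<kappa> w"
  by (auto simp: clk_matrix_def Lij_Cons fun_eq_iff)

lemma mho_append:
  assumes "n \<ge> 1" "0 \<le> \<kappa>"
  shows "mho n \<kappa> (u @ v) = trop_mult n (mho n \<kappa> u) (mho n \<kappa> v)"
proof (induction u)
  case Nil
  have "trop_mult n (tropE n) (mho n \<kappa> v) = mho n \<kappa> v"
    using assms by (simp add: tropE_eq_tropA_0[of n \<kappa>] mho_eq_clk_matrix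
        tropA_mult_clk_matrix clk_matrix_Cons_0)
  then show ?case by simp
next
  case (Cons l u)
  then show ?case by (simp add: trop_mult_assoc[OF assms(1)])
qed

lemma mho_snoc:
  assumes "n \<ge> 1" "0 \<le> \<kappa>"
  shows "mho n \<kappa> (w @ [l]) = trop_mult n (mho n \<kappa> w) (tropA n \<kappa> l)"
proof -
  have "mho n \<kappa> [l] = tropA n \<kappa> l"
    unfolding mho_eq_clk_matrix[OF assms(2)]
    by (auto simp: clk_matrix_def tropA_def fun_eq_iff Lij_Cons zero_ereal_def)
  with mho_append[OF assms] show ?thesis by simp
qed

lemma clk_equiv_iff_mho_eq:
  assumes "\<kappa> > 0"
  shows "clk_equiv n u v \<longleftrightarrow> mho n \<kappa> u = mho n \<kappa> v"
  using assms by (auto simp: mho_eq_clk_matrix clk_matrix_def clk_equiv_def fun_eq_iff)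

lemma mho_words_eq_gen_submonoid:
  assumes "n \<ge> 1" "0 \<le> \<kappa>"
  shows "mho n \<kappa> ` words n = gen_submonoid n \<kappa>"
proof
  have "mho n \<kappa> w \<in> gen_submonoid n \<kappa>" if "set w \<subseteq> {1..n}" for w
    using that
  proof (induction w rule: rev_induct)
    case Nil
    then show ?case by (simp add: gen_submonoid.unit)
  next
    case (snoc l w)
    then show ?case by (simp add: mho_snoc[OF assms] gen_submonoid.step)
  qed
  then show "mho n \<kappa> ` words n \<subseteq> gen_submonoid n \<kappa>" by (auto simp: words_def)
next
  show "gen_submonoid n \<kappa> \<subseteq> mho n \<kappa> ` words n"
  proof
    fix M assume "M \<in> gen_submonoid n \<kappa>"
    then show "M \<in> mho n \<kappa> ` words n"
    proof induction
      case unit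
      show ?case by (rule rev_image_eqI[of "[]"]) (simp_all add: words_def)
    next
      case (step M l)
      then obtain w where "w \<in> words n" "M = mho n \<kappa> w" by auto
      with step show ?case
        by (intro rev_image_eqI[of "w @ [l]"]) (auto simp: words_def mho_snoc[OF assms])
    qed
  qed
qed

theorem mainTheorem7:
  fixes n :: nat and \<kappa> :: real
  assumes "n \<ge> 1" and "\<kappa> > 0"
  shows "(\<forall>u \<in> words n. \<forall>v \<in> words n.
            mho n \<kappa> (u @ v) = trop_mult n (mho n \<kappa> u) (mho n \<kappa> v))
       \<and> (\<forall>u \<in> words n. \<forall>v \<in> words n. clk_equiv n u v \<longleftrightarrow> mho n \<kappa> u = mho n \<kappa> v)
       \<and> mho n \<kappa> ` words n = gen_submonoid n \<kappa>"
  using assms mho_append clk_equiv_iff_mho_eq mho_words_eq_gen_submonoid by simp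

end
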